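(* In the setting below, for every $1\le k\le n$ and every $1\le t\le mn+1$, almost surely $$b(k,t)\le c(k,t)\quad\text{or}\quad \sum_{i=1}^{mn}y_i>Y.$$
   Context: Setting: $m,n$ are positive integers with $n\ge 1200\sqrt m$. A deck of $mn$ cards with $m$ copies of each label $1,\dots,n$ is shuffled uniformly at random. A fixed guessing strategy is used: in round $t=1,\dots,mn$ the Guesser guesses $g_t\in\{1,\dots,n\}$, a function (possibly randomized independently of the deck) of $y_1,\dots,y_{t-1}$, where $y_t\in\{0,1\}$ is the indicator that the $t$-th card has label $g_t$. For a vector $v$, $v_{\le t}:=(v_1,\dots,v_t)$. For $1\le k\le n$, $1\le t\le mn+1$: $a(k,t):=|\{1\le i<t: g_i=k\}|$ and $b(k,t):=|\{1\le i<t: g_i=k,\ y_i=1\}|$ (so $b(k,t)\le m$). It is known that, whenever $a(g_t,t)<mn-\sum_{i=1}^{t-1}y_i$, $$\mathbb{E}(y_t\mid g_{\le t},y_{\le t-1})\le \frac{m-b(g_t,t)}{mn-a(g_t,t)-\sum_{i=1}^{t-1}y_i}.$$ Let $Y:=\lfloor \tfrac16\sqrt m\, n\rfloor$. Let $(z_1,\dots,z_{mn})\in\{0,1\}^{mn}$ be a random vector (on an extension of the probability space), with $c(k,t):=|\{1\le i<t: g_i=k,\ z_i=1\}|$, satisfying almost surely: (a) for all $k,t$: $m-\max\{mn-a(k,t)-Y,0\}\le c(k,t)\le m$; (b) for each $t$, conditioned on $g_{\le t},y_{\le t}$, the coordinates of $z_{\le t}$ are mutually independent and independent from $g_{\le mn},y_{\le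 mn}$; (c) for each $t$, if $a(g_t,t)<mn-Y$ then $\mathbb{E}(z_t\mid g_{\le t},z_{\le t-1})=\frac{m-c(g_t,t)}{mn-a(g_t,t)-Y}$; (d) for each $t$, if $\mathbb{E}(y_t\mid g_{\le t},y_{\le t-1})\le\mathbb{E}(z_t\mid g_{\le t},z_{\le t-1})$ then $y_t\le z_t$. (Such a vector exists.) *)

theory Defs
  imports "HOL-Probability.Probability" "HOL-Library.Multiset"
begin

text \<open>Arrangements of a deck of m*n cards with m copies of each label 1..n
  (the t-th card, t = 1..m*n, is the list entry at index t - 1).\<close>
definition decks :: "nat \<Rightarrow> nat \<Rightarrow> nat list set" where
  "decks m n = {xs. length xs = m * n \<and> (\<forall>k\<in>{1..n}. count (mset xs) k = m)}"

definition cnt_guess :: "(nat \<Rightarrow> nat) \<Rightarrow> nat \<Rightarrow> nat \<Rightarrow> nat" where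
  "cnt_guess gs k t = card {i. 1 \<le> i \<and> i < t \<and> gs i = k}"

definition cnt_hit :: "(nat \<Rightarrow> nat) \<Rightarrow> (nat \<Rightarrow> nat) \<Rightarrow> nat \<Rightarrow> nat \<Rightarrow> nat" where
  "cnt_hit gs ys k t = card {i. 1 \<le> i \<and> i < t \<and> gs i = k \<and> ys i = 1}"

definition Ybound :: "nat \<Rightarrow> nat \<Rightarrow> nat" where
  "Ybound m n = nat \<lfloor>sqrt (real m) * real n / 6\<rfloor>"

text \<open>Sigma algebra generated by (g_1..g_t, w_1..w_{t-1}) (the history used in the
  conditional expectations E(w_t | g_{\<le>t}, w_{\<le>t-1})).\<close>
definition hist :: "'a measure \<Rightarrow> ('a \<Rightarrow> nat \<Rightarrow> nat) \<Rightarrow> ('a \<Rightarrow> nat \<Rightarrow> nat) \<Rightarrow> nat \<Rightarrow> 'a measure" where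
  "hist M g w t = vimage_algebra (space M)
      (\<lambda>\<omega>. (map (g \<omega>) [1..<t+1], map (w \<omega>) [1..<t])) (count_space UNIV)"

text \<open>Condition (b), for a fixed t, for discrete random variables:
  conditioned on V = (g_{\<le>t}, y_{\<le>t}), the variables z_1, ..., z_t and
  W = (g_{\<le>N}, y_{\<le>N}) (N = m n) are mutually independent.  Written in
  cross-multiplied form P(V=v, Z=ws, W=u) P(V=v)^t = (prod_i P(V=v, z_i = ws_i)) P(V=v, W=u),
  which for discrete variables is exactly conditional mutual independence
  (and is trivially true on null events V = v).\<close>
definition cond_indep_z ::
  "'a measure \<Rightarrow> nat \<Rightarrow> ('a \<Rightarrow> nat \<Rightarrow> nat) \<Rightarrow> ('a \<Rightarrow> nat \<Rightarrow> nat) \<Rightarrow> ('a \<Rightarrow> nat \<Rightarrow> nat) \<Rightarrow> nat \<Rightarrow> bool" where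
  "cond_indep_z M N g y z t \<longleftrightarrow>
    (let V = (\<lambda>\<omega>. (map (g \<omega>) [1..<t+1], map (y \<omega>) [1..<t+1]));
         W = (\<lambda>\<omega>. (map (g \<omega>) [1..<N+1], map (y \<omega>) [1..<N+1]))
     in \<forall>v u ws. length ws = t \<longrightarrow>
        measure M {\<omega>\<in>space M. V \<omega> = v \<and> map (z \<omega>) [1..<t+1] = ws \<and> W \<omega> = u}
          * measure M {\<omega>\<in>space M. V \<omega> = v} ^ t
        = (\<Prod>i<t. measure M {\<omega>\<in>space M. V \<omega> = v \<and> z \<omega> (i+1) = ws ! i})
          * measure M {\<omega>\<in>space M. V \<omega> = v \<and> W \<omega> = u})"

end

theory Submission
  imports Defs "HOL-Combinatorics.Multiset_Permutations"
begin

(* The claim holds pathwise on the event that the deck is a valid deck and all the almost-sure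
   hypotheses hold; it is proved by induction on t. Suppose b(k,t) <= c(k,t) and the guess at
   time t is k and correct. If b(k,t) < c(k,t) nothing can go wrong. If b(k,t) = c(k,t), either
   a(k,t) >= mn - Y, and then (a) forces c(k,t+1) = m, which bounds b(k,t+1) because the deck
   has only m cards labelled k; or, as at most Y of the y_i are 1, the known bound for y_t has the
   same numerator as the formula (c) for z_t and a denominator at least as large, so (d)
   yields z_t = 1. *)

definition deck_mset :: "nat \<Rightarrow> nat \<Rightarrow> nat multiset" where
  "deck_mset m n = (\<Sum>k\<in>{1..n}. replicate_mset m k)"

lemma count_deck_mset: "count (deck_mset m n) k = (if k \<in> {1..n} then m else 0)"
  by (simp add: deck_mset_def count_sum)

lemma size_deck_mset: "size (deck_mset m n) = m * n"
  unfolding deck_mset_def by (induction n) (simp_all add: atLeastAtMostSuc_conv)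

lemma decks_eq_permutations_of_multiset: "decks m n = permutations_of_multiset (deck_mset m n)"
proof (intro set_eqI iffI)
  fix xs assume xs: "xs \<in> decks m n"
  have sub: "deck_mset m n \<subseteq># mset xs"
    using xs by (auto simp: subseteq_mset_def count_deck_mset decks_def)
  have "size (deck_mset m n) = size (mset xs)"
    using xs by (simp add: size_deck_mset decks_def)
  then have "\<not> deck_mset m n \<subset># mset xs"
    using mset_subset_size by fastforce
  then have "mset xs = deck_mset m n"
    using sub by (simp add: subset_mset.le_less)
  then show "xs \<in> permutations_of_multiset (deck_mset m n)"
    by (rule permutations_of_multisetI)
next
  fix xs assume "xs \<in> permutations_of_multiset (deck_mset m n)"
  then have "mset xs = deck_mset m n" by (rule permutations_of_multisetD)
  then show "xs \<in> decks m n"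
    by (simp add: decks_def count_deck_mset flip: size_mset size_deck_mset)
qed

lemma finite_decks: "finite (decks m n)"
  by (simp add: decks_eq_permutations_of_multiset)

lemma decks_not_empty: "decks m n \<noteq> {}"
  by (simp add: decks_eq_permutations_of_multiset)

lemma AE_all_atLeastAtMost:
  fixes N :: nat
  assumes "\<And>s. 1 \<le> s \<longrightarrow> s \<le> N \<longrightarrow> (AE x in M. P s x)"
  shows "AE x in M. \<forall>s\<in>{1..N}. P s x"
  using assms by (intro AE_finite_allI) auto

lemma cnt_hit_Suc:
  assumes "1 \<le> t"
  shows "cnt_hit gs ys k (Suc t) = cnt_hit gs ys k t + (if gs t = k \<and> ys t = 1 then 1 else 0)"
proof -
  let ?H = "\<lambda>t. {i. 1 \<le> i \<and> i < t \<and> gs i = k \<and> ys i = 1}"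
  have "?H (Suc t) = (if gs t = k \<and> ys t = 1 then insert t (?H t) else ?H t)"
    using assms by (auto simp: less_Suc_eq)
  moreover have "finite (?H t)" and "t \<notin> ?H t" by auto
  ultimately show ?thesis by (simp add: cnt_hit_def)
qed

lemma cnt_hit_Suc_0 [simp]: "cnt_hit gs ys k (Suc 0) = 0"
  by (simp add: cnt_hit_def)

lemma cnt_guess_mono: "s \<le> t \<Longrightarrow> cnt_guess gs k s \<le> cnt_guess gs k t"
  unfolding cnt_guess_def by (rule card_mono) auto

lemma cnt_hit_le_count:
  assumes "t \<le> length d + 1" and "\<And>s. 1 \<le> s \<Longrightarrow> s < t \<Longrightarrow> ys s = 1 \<Longrightarrow> d ! (s - 1) = gs s"
  shows "cnt_hit gs ys k t \<le> count (mset d) k"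
proof -
  let ?H = "{i. 1 \<le> i \<and> i < t \<and> gs i = k \<and> ys i = 1}"
  have "card ?H \<le> card {j. j < length d \<and> k = d ! j}"
    by (rule card_inj_on_le[where f = "\<lambda>i. i - 1"]) (use assms in \<open>auto simp: inj_on_def\<close>)
  then show ?thesis
    by (simp add: cnt_hit_def count_mset count_list_eq_length_filter length_filter_conv_card)
qed

(* The hypotheses along one sample path; Ey and Ez are the values there of the conditional
   expectations of y_s and z_s. *)
locale coupled_guessing_path =
  fixes m n Y :: nat and d :: "nat list" and gs ys zs :: "nat \<Rightarrow> nat" and Ey Ez :: "nat \<Rightarrow> real"
  assumes deck: "d \<in> decks m n"
    and ys_def: "\<And>s. 1 \<le> s \<Longrightarrow> s \<le> m * n \<Longrightarrow> ys s = (if d ! (s - 1) = gs s then 1 else 0)"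
    and Ey_le: "\<And>s. 1 \<le> s \<Longrightarrow> s \<le> m * n \<Longrightarrow>
      real (cnt_guess gs (gs s) s) < real (m * n) - real (\<Sum>i=1..<s. ys i) \<Longrightarrow>
      Ey s \<le> (real m - real (cnt_hit gs ys (gs s) s))
        / (real (m * n) - real (cnt_guess gs (gs s) s) - real (\<Sum>i=1..<s. ys i))"
    and zs_le_1: "\<And>s. zs s \<le> 1"
    and zs_hits_bounds: "\<And>k s. k \<in> {1..n} \<Longrightarrow> s \<in> {1..m * n + 1} \<Longrightarrow>
      real m - max (real (m * n) - real (cnt_guess gs k s) - real Y) 0 \<le> real (cnt_hit gs zs k s)
      \<and> cnt_hit gs zs k s \<le> m"
    and Ez_eq: "\<And>s. 1 \<le> s \<Longrightarrow> s \<le> m * n \<Longrightarrow>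
      real (cnt_guess gs (gs s) s) < real (m * n) - real Y \<Longrightarrow>
      Ez s = (real m - real (cnt_hit gs zs (gs s) s))
        / (real (m * n) - real (cnt_guess gs (gs s) s) - real Y)"
    and coupling: "\<And>s. 1 \<le> s \<Longrightarrow> s \<le> m * n \<Longrightarrow> Ey s \<le> Ez s \<Longrightarrow> ys s \<le> zs s"
    and few_hits: "(\<Sum>i=1..m * n. ys i) \<le> Y"
begin

lemma ys_hit_imp_card_matches:
  assumes "1 \<le> s" and "s \<le> m * n" and "ys s = 1"
  shows "d ! (s - 1) = gs s"
  using ys_def[OF assms(1,2)] assms(3) by (metis zero_neq_one)

lemma ys_hits_le_m:
  assumes "k \<in> {1..n}" and "t \<le> m * n + 1"
  shows "cnt_hit gs ys k t \<le> m"
proof -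
  have "length d = m * n"
    using deck by (simp add: decks_def)
  then have "cnt_hit gs ys k t \<le> count (mset d) k"
    using assms(2) ys_hit_imp_card_matches by (intro cnt_hit_le_count) auto
  then show ?thesis
    using assms deck by (simp add: decks_def)
qed

lemma hits_before_le_Y:
  assumes "s \<le> m * n + 1"
  shows "(\<Sum>i=1..<s. ys i) \<le> Y"
proof -
  have "(\<Sum>i=1..<s. ys i) \<le> (\<Sum>i=1..m * n. ys i)"
    by (rule sum_mono2) (use assms in auto)
  then show ?thesis
    using few_hits by simp
qed

lemma hit_step_saturated:
  assumes k: "k \<in> {1..n}" and s: "s \<in> {1..m * n}"
    and saturated: "\<not> real (cnt_guess gs k s) < real (m * n) - real Y"
  shows "cnt_hit gs ys k (Suc s) \<le> cnt_hit gs zs k (Suc s)"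
proof -
  have "real (m * n) - real (cnt_guess gs k (Suc s)) - real Y \<le> 0"
    using saturated cnt_guess_mono[of s "Suc s" gs k] by simp
  then have "m \<le> cnt_hit gs zs k (Suc s)"
    using zs_hits_bounds[of k "Suc s"] k s by simp
  moreover have "cnt_hit gs ys k (Suc s) \<le> m"
    using ys_hits_le_m k s by simp
  ultimately show ?thesis by simp
qed

lemma hit_step_tied:
  assumes k: "k \<in> {1..n}" and s: "s \<in> {1..m * n}" and "gs s = k" and "ys s = 1"
    and tied: "cnt_hit gs ys k s = cnt_hit gs zs k s"
    and unsaturated: "real (cnt_guess gs k s) < real (m * n) - real Y"
  shows "zs s = 1"
proof -
  let ?a = "real (cnt_guess gs k s)" and ?S = "real (\<Sum>i=1..<s. ys i)"
  have "(\<Sum>i=1..<s. ys i) \<le> Y"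
    using hits_before_le_Y s by simp
  then have "?S \<le> real Y"
    by (simp only: of_nat_le_iff)
  have "Ey s \<le> (real m - real (cnt_hit gs ys k s)) / (real (m * n) - ?a - ?S)"
    using Ey_le s assms \<open>?S \<le> real Y\<close> by fastforce
  also have "\<dots> \<le> (real m - real (cnt_hit gs zs k s)) / (real (m * n) - ?a - real Y)"
    unfolding tied
    using zs_hits_bounds[of k s] k s unsaturated \<open>?S \<le> real Y\<close>
    by (intro divide_left_mono) auto
  also have "\<dots> = Ez s"
    using Ez_eq s assms by simp
  finally have "ys s \<le> zs s"
    using coupling s by simp
  then show ?thesis
    using \<open>ys s = 1\<close> zs_le_1 le_antisym by metis
qed

lemma hit_step:
  assumes k: "k \<in> {1..n}" and s: "s \<in> {1..m * n}"
    and le: "cnt_hit gs ys k s \<le> cnt_hit gs zs k s"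
  shows "cnt_hit gs ys k (Suc s) \<le> cnt_hit gs zs k (Suc s)"
proof (cases "gs s = k \<and> ys s = 1")
  case False
  then show ?thesis
    using le s cnt_hit_Suc[of s gs ys k] cnt_hit_Suc[of s gs zs k] by auto
next
  case hit: True
  show ?thesis
  proof (cases "real (cnt_guess gs k s) < real (m * n) - real Y")
    case False
    then show ?thesis using hit_step_saturated k s by blast
  next
    case unsaturated: True
    show ?thesis
    proof (cases "cnt_hit gs ys k s < cnt_hit gs zs k s")
      case True
      then show ?thesis using s by (simp add: cnt_hit_Suc)
    next
      case False
      then have "cnt_hit gs ys k s = cnt_hit gs zs k s" using le by simp
      then have "zs s = 1" using hit_step_tied k s hit unsaturated by blast
      then show ?thesis using le hit s by (simp add: cnt_hit_Suc)
    qed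
  qed
qed

lemma ys_hits_le_zs_hits:
  assumes k: "k \<in> {1..n}"
  shows "t \<le> m * n + 1 \<Longrightarrow> cnt_hit gs ys k t \<le> cnt_hit gs zs k t"
proof (induction t)
  case 0
  then show ?case by (simp add: cnt_hit_def)
next
  case (Suc s)
  then show ?case
    using hit_step[OF k, of s] by (cases s) auto
qed

end

theorem lemma2p6:
  fixes M :: "'a measure" and R :: "'b measure"
    and m n :: nat
    and deck :: "'a \<Rightarrow> nat list"
    and \<rho> :: "'a \<Rightarrow> 'b"
    and G :: "nat \<Rightarrow> nat list \<Rightarrow> 'b \<Rightarrow> nat"
    and g y z :: "'a \<Rightarrow> nat \<Rightarrow> nat"
    and k t :: nat
  assumes prob: "prob_space M"
    and mpos: "0 < m" and npos: "0 < n"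
    and nbig: "real n \<ge> 1200 * sqrt (real m)"
    \<comment> \<open>uniformly shuffled deck\<close>
    and deck_meas: "deck \<in> M \<rightarrow>\<^sub>M count_space UNIV"
    and deck_unif: "distr M (count_space UNIV) deck = measure_pmf (pmf_of_set (decks m n))"
    \<comment> \<open>the guessing strategy: g_t is a function of y_1..y_{t-1} and of
        extra randomness \<rho> independent of the deck\<close>
    and rho_meas: "\<rho> \<in> M \<rightarrow>\<^sub>M R"
    and rho_indep: "prob_space.indep_set M
        (sets (vimage_algebra (space M) deck (count_space UNIV)))
        (sets (vimage_algebra (space M) \<rho> R))"
    and G_meas: "\<And>s ys. G s ys \<in> R \<rightarrow>\<^sub>M count_space UNIV"
    and G_range: "\<And>s ys r. G s ys r \<in> {1..n}"
    and g_def: "\<And>\<omega> s. 1 \<le> s \<Longrightarrow> s \<le> m * n \<Longrightarrow> g \<omega> s = G s (map (y \<omega>) [1..<s]) (\<rho> \<omega>)"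
    and y_def: "\<And>\<omega> s. 1 \<le> s \<Longrightarrow> s \<le> m * n \<Longrightarrow>
                  y \<omega> s = (if deck \<omega> ! (s - 1) = g \<omega> s then 1 else 0)"
    \<comment> \<open>the known bound on E(y_t | g_{\<le>t}, y_{\<le>t-1})\<close>
    and known: "\<And>s. 1 \<le> s \<Longrightarrow> s \<le> m * n \<Longrightarrow> AE \<omega> in M.
         real (cnt_guess (g \<omega>) (g \<omega> s) s) < real (m * n) - real (\<Sum>i=1..<s. y \<omega> i) \<longrightarrow>
         real_cond_exp M (hist M g y s) (\<lambda>\<omega>. real (y \<omega> s)) \<omega>
           \<le> (real m - real (cnt_hit (g \<omega>) (y \<omega>) (g \<omega> s) s))
             / (real (m * n) - real (cnt_guess (g \<omega>) (g \<omega> s) s) - real (\<Sum>i=1..<s. y \<omega> i))"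
    \<comment> \<open>the coupled vector z on the (extended) probability space M\<close>
    and z_meas: "\<And>s. (\<lambda>\<omega>. z \<omega> s) \<in> M \<rightarrow>\<^sub>M count_space UNIV"
    and z01: "\<And>\<omega> s. z \<omega> s \<le> 1"
    and za: "AE \<omega> in M. \<forall>k'\<in>{1..n}. \<forall>s\<in>{1..m*n+1}.
         real m - max (real (m * n) - real (cnt_guess (g \<omega>) k' s) - real (Ybound m n)) 0
           \<le> real (cnt_hit (g \<omega>) (z \<omega>) k' s)
         \<and> cnt_hit (g \<omega>) (z \<omega>) k' s \<le> m"
    and zb: "\<And>s. 1 \<le> s \<Longrightarrow> s \<le> m * n \<Longrightarrow> cond_indep_z M (m * n) g y z s"
    and zc: "\<And>s. 1 \<le> s \<Longrightarrow> s \<le> m * n \<Longrightarrow> AE \<omega> in M.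
         real (cnt_guess (g \<omega>) (g \<omega> s) s) < real (m * n) - real (Ybound m n) \<longrightarrow>
         real_cond_exp M (hist M g z s) (\<lambda>\<omega>. real (z \<omega> s)) \<omega>
           = (real m - real (cnt_hit (g \<omega>) (z \<omega>) (g \<omega> s) s))
             / (real (m * n) - real (cnt_guess (g \<omega>) (g \<omega> s) s) - real (Ybound m n))"
    and zd: "\<And>s. 1 \<le> s \<Longrightarrow> s \<le> m * n \<Longrightarrow> AE \<omega> in M.
         real_cond_exp M (hist M g y s) (\<lambda>\<omega>. real (y \<omega> s)) \<omega>
           \<le> real_cond_exp M (hist M g z s) (\<lambda>\<omega>. real (z \<omega> s)) \<omega> \<longrightarrow>
         y \<omega> s \<le> z \<omega> s"
    and k: "1 \<le> k" "k \<le> n"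
    and t: "1 \<le> t" "t \<le> m * n + 1"
  shows "AE \<omega> in M. cnt_hit (g \<omega>) (y \<omega>) k t \<le> cnt_hit (g \<omega>) (z \<omega>) k t
                      \<or> (\<Sum>i=1..m*n. y \<omega> i) > Ybound m n"
proof -
  have "AE \<omega> in M. deck \<omega> \<in> decks m n"
  proof (rule AE_distrD[OF deck_meas])
    show "AE xs in distr M (count_space UNIV) deck. xs \<in> decks m n"
      unfolding deck_unif using AE_measure_pmf[of "pmf_of_set (decks m n)"]
      by (simp add: finite_decks decks_not_empty)
  qed
  then show ?thesis
    using za AE_all_atLeastAtMost[OF known[unfolded atomize_imp]] AE_all_atLeastAtMost[OF zc[unfolded atomize_imp]] AE_all_atLeastAtMost[OF zd[unfolded atomize_imp]]
  proof eventually_elim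
    case (elim \<omega>)
    show ?case
    proof (rule disjCI)
      assume "\<not> (\<Sum>i=1..m*n. y \<omega> i) > Ybound m n"
      then interpret coupled_guessing_path m n "Ybound m n" "deck \<omega>" "g \<omega>" "y \<omega>" "z \<omega>"
          "\<lambda>s. real_cond_exp M (hist M g y s) (\<lambda>\<omega>. real (y \<omega> s)) \<omega>"
          "\<lambda>s. real_cond_exp M (hist M g z s) (\<lambda>\<omega>. real (z \<omega> s)) \<omega>"
        using elim y_def z01 by unfold_locales auto
      show "cnt_hit (g \<omega>) (y \<omega>) k t \<le> cnt_hit (g \<omega>) (z \<omega>) k t"
        using ys_hits_le_zs_hits k t by simp
    qed
  qed
qed

end
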